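(* Let $d,n\in\mathbb N$ with $n\ge2$, $A\in\mathbb R^{d\times d}$, $V=I_d$, and let $f$ be self-attention with parameters $(A,V)$. Let $\gamma$ be a real eigenvalue of $A$ and $u\in\mathbb R^d$ an associated unit eigenvector. (1) If $\gamma\ge0$, let $X:=(u,\tfrac u2,\dots,\tfrac u2)\in(\mathbb R^d)^n$. Then for every $R>0$, $$\|D_{RX}f\|_2\ge\frac{\sqrt{n-1}}{1+(n-1)e^{-R^2\gamma/4}}.$$ (2) If $\gamma<0$, let $X:=(u,-u,\dots,-u)\in(\mathbb R^d)^n$. Then for every $R>0$, $$\|D_{RX}f\|_2\ge\frac{\sqrt{n-1}}{1+(n-1)e^{-2R^2|\gamma|}}.$$
   Context: For $X=(x_1,\dots,x_n)\in(\mathbb R^d)^n$, $f(X)=\big(V\sum_{j=1}^nP_{ij}x_j\big)_{1\le i\le n}$ with $P_{ij}=\exp(x_i^\top A^\top x_j)/\sum_{l=1}^n\exp(x_i^\top A^\top x_l)$. $D_Xf$ is the differential of $f$ at $X$, and $\|D_Xf\|_2$ is its operator norm when $(\mathbb R^d)^n$ is equipped with the Frobenius norm $\|X\|_F=(\sum_i|x_i|^2)^{1/2}$ on both input and output. $RX$ denotes $(Rx_1,\dots,Rx_n)$. *)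

theory Defs
  imports "HOL-Analysis.Analysis"
begin

text \<open>Token configurations X = (x_1,...,x_n) in (R^d)^n are modelled as
  X :: real^'d^'n, with token x_i = X$i.  The norm on real^'d^'n is the
  Euclidean norm of the vector of token norms, i.e. the Frobenius norm.\<close>

text \<open>Attention weights P_ij = exp(x_i^T A^T x_j) / sum_l exp(x_i^T A^T x_l);
  note x_i^T A^T x_j = (A x_i) . x_j.\<close>
definition attn_P :: "real^'d^'d \<Rightarrow> real^'d^'n \<Rightarrow> 'n \<Rightarrow> 'n \<Rightarrow> real" where
  "attn_P A X i j =
     exp ((A *v (X$i)) \<bullet> (X$j)) / (\<Sum>l\<in>UNIV. exp ((A *v (X$i)) \<bullet> (X$l)))"

definition self_attention :: "real^'d^'d \<Rightarrow> real^'d^'d \<Rightarrow> real^'d^'n \<Rightarrow> real^'d^'n" where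
  "self_attention A V X = (\<chi> i. V *v (\<Sum>j\<in>UNIV. attn_P A X i j *\<^sub>R (X$j)))"

end

theory Submission
  imports Defs
begin

text \<open>Let h = (u, 0, ..., 0) move the first token of R X along u and test the output
  against w = (0, u, ..., u), so that \<open>norm h = 1\<close> and \<open>norm w = sqrt (n - 1)\<close>.
  All tokens stay multiples of the eigenvector u, so every output row but the first is
  u times a softmax-weighted mean of the token positions along u.  Moving the first
  position raises this mean at rate at least its own softmax weight P, because the
  sign condition on the eigenvalue makes the covariance term nonnegative.  Hence
  \<open>D h \<bullet> w \<ge> (n - 1) P\<close> for the derivative D, and Cauchy-Schwarz gives
  \<open>onorm D \<ge> sqrt (n - 1) P\<close>.\<close>

lemma sum_UNIV_if_eq:
  fixes F :: "'a \<Rightarrow> real" and i0 :: "'n::finite"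
  shows "(\<Sum>j\<in>UNIV. F (if j = i0 then p else q)) = F p + (real CARD('n) - 1) * F q"
proof -
  have "(\<Sum>j\<in>UNIV. F (if j = i0 then p else q)) = F p + (\<Sum>j\<in>UNIV-{i0}. F (if j = i0 then p else q))"
    by (simp add: sum.remove[of UNIV i0])
  also have "(\<Sum>j\<in>UNIV-{i0}. F (if j = i0 then p else q)) = (\<Sum>j\<in>UNIV-{i0}. F q)"
    by (rule sum.cong) auto
  also have "\<dots> = (real CARD('n) - 1) * F q"
    by (simp add: card_Diff_singleton of_nat_diff)
  finally show ?thesis .
qed

lemma norm_vec_if_eq:
  fixes i0 :: "'n::finite" and p q :: "'a::real_normed_vector"
  shows "norm ((\<chi> i. if i = i0 then p else q) :: 'a^'n)
       = sqrt ((norm p)\<^sup>2 + (real CARD('n) - 1) * (norm q)\<^sup>2)"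
  unfolding norm_vec_def L2_set_def
  using sum_UNIV_if_eq[of "\<lambda>v. (norm v)\<^sup>2" i0 p q] by simp

lemma differentiable_attn_P: "(\<lambda>X::real^'d^'n. attn_P A X i j) differentiable (at Y)"
proof -
  have score: "(\<lambda>X::real^'d^'n. (A *v (X $ i)) \<bullet> X $ l) differentiable (at Y)" for l
    by (intro differentiable_inner bounded_linear_imp_differentiable
        bounded_linear_compose[OF matrix_vector_mul_bounded_linear] bounded_linear_vec_nth)
  have "(\<lambda>X::real^'d^'n. exp ((A *v (X $ i)) \<bullet> X $ l)) differentiable (at Y)" for l
    using differentiable_compose[OF _ score, of exp]
    by (simp add: o_def differentiableI[OF has_field_derivative_imp_has_derivative[OF DERIV_exp]])
  moreover have "(\<Sum>l\<in>UNIV. exp ((A *v (Y $ i)) \<bullet> Y $ l)) \<noteq> 0"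
    by (intro less_imp_neq[symmetric] sum_pos) auto
  ultimately show ?thesis
    unfolding attn_P_def by (intro differentiable_divide differentiable_sum ballI) auto
qed

lemma bounded_linear_vec_single:
  "bounded_linear (\<lambda>v::'a::real_normed_vector. (\<chi> k::'n::finite. if k = i then v else 0))"
  by (rule bounded_linear_intro[where K = 1]) (auto simp: vec_eq_iff norm_vec_if_eq)

lemma vec_lambda_eq_sum_single:
  "(\<chi> i. F i) = (\<Sum>i\<in>UNIV. (\<chi> k::'n::finite. if k = i then F i else (0::'a::real_normed_vector)))"
  by (simp add: vec_eq_iff sum_component if_distrib cong: if_cong)

lemma differentiable_self_attention: "self_attention A V differentiable (at (Y::real^'d^'n))"
proof -
  have eq: "self_attention A V =
        (\<lambda>X. \<Sum>i\<in>UNIV. (\<chi> k::'n. if k = i then V *v (\<Sum>j\<in>UNIV. attn_P A X i j *\<^sub>R X $ j) else 0))"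
    unfolding self_attention_def by (subst vec_lambda_eq_sum_single) simp
  show ?thesis
    unfolding eq
    apply (intro differentiable_sum ballI finite)
    apply (rule differentiable_compose[OF bounded_linear_imp_differentiable[OF bounded_linear_vec_single],
          unfolded o_def])
    apply (rule differentiable_compose[OF bounded_linear_imp_differentiable[OF matrix_vector_mul_bounded_linear],
          unfolded o_def])
    apply (intro differentiable_sum ballI finite differentiable_scaleR differentiable_attn_P
        bounded_linear_imp_differentiable[OF bounded_linear_vec_nth])
    done
qed

lemma self_attention_collinear_inner:
  fixes i0 :: "'n::finite" and u :: "real^'d::finite"
  assumes unit: "norm u = 1" and eig: "A *v u = \<gamma> *\<^sub>R u"
  defines "m \<equiv> real CARD('n) - 1"
  shows "self_attention A (mat 1) (\<chi> j::'n. (if j = i0 then p else q) *\<^sub>R u) \<bullet> (\<chi> k. if k = i0 then 0 else u)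
       = m * ((exp (\<gamma> * q * p) * p + m * exp (\<gamma> * q * q) * q) / (exp (\<gamma> * q * p) + m * exp (\<gamma> * q * q)))"
    (is "?L = m * ?s")
proof -
  define Y where "Y = (\<chi> j::'n. (if j = i0 then p else q) *\<^sub>R u)"
  define S where "S = exp (\<gamma> * q * p) + m * exp (\<gamma> * q * q)"
  have uu: "u \<bullet> u = 1"
    using unit by (simp add: power2_norm_eq_inner[symmetric])
  have Yj: "Y $ j = (if j = i0 then p else q) *\<^sub>R u" for j
    by (simp add: Y_def)
  have row: "self_attention A (mat 1) Y $ i \<bullet> u = ?s" if "i \<noteq> i0" for i
  proof -
    have score: "(A *v (Y $ i)) \<bullet> (Y $ j) = \<gamma> * q * (if j = i0 then p else q)" for j
      using that uu by (simp add: Yj eig matrix_vector_mult_scaleR)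
    have "(\<Sum>l\<in>UNIV. exp ((A *v (Y $ i)) \<bullet> (Y $ l))) = S"
      using sum_UNIV_if_eq[of "\<lambda>c. exp (\<gamma> * q * c)" i0 p q] by (simp add: score S_def m_def)
    then have "attn_P A Y i j = exp (\<gamma> * q * (if j = i0 then p else q)) / S" for j
      by (simp add: attn_P_def score)
    then have "self_attention A (mat 1) Y $ i \<bullet> u
          = (\<Sum>j\<in>UNIV. exp (\<gamma> * q * (if j = i0 then p else q)) * (if j = i0 then p else q) / S)"
      by (simp add: self_attention_def inner_sum_left Yj uu)
    also have "\<dots> = ?s"
      using sum_UNIV_if_eq[of "\<lambda>c. exp (\<gamma> * q * c) * c / S" i0 p q]
      by (simp add: S_def m_def add_divide_distrib)
    finally show ?thesis .
  qed
  have "?L = (\<Sum>i\<in>UNIV-{i0}. self_attention A (mat 1) Y $ i \<bullet> (if i = i0 then 0 else u))"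
    by (simp add: Y_def inner_vec_def sum.remove[of UNIV i0])
  also have "\<dots> = (\<Sum>i\<in>UNIV-{i0}. ?s)"
    by (rule sum.cong) (auto simp: row)
  also have "\<dots> = m * ?s"
    by (simp add: m_def card_Diff_singleton of_nat_diff)
  finally show ?thesis .
qed

lemma softmax_mean_has_derivative_ge:
  fixes \<beta> x y m :: real
  assumes m: "m \<ge> 0" and sign: "\<beta> * (x - y) \<ge> 0"
  shows "\<exists>g'. ((\<lambda>t. (exp (\<beta> * (x + t)) * (x + t) + m * exp (\<beta> * y) * y)
                     / (exp (\<beta> * (x + t)) + m * exp (\<beta> * y))) has_real_derivative g') (at 0)
             \<and> 1 / (1 + m * exp (\<beta> * (y - x))) \<le> g'"
proof -
  define E where "E = exp (\<beta> * x)"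
  define K where "K = exp (\<beta> * y)"
  define D where "D = E + m * K"
  have E: "E > 0" and K: "K > 0" by (simp_all add: E_def K_def)
  have D: "D > 0" using E K m by (simp add: D_def add_pos_nonneg)
  have numerator: "((\<lambda>t. exp (\<beta> * (x + t)) * (x + t) + m * K * y) has_real_derivative E * \<beta> * x + E) (at 0)"
    by (auto intro!: derivative_eq_intros simp: E_def algebra_simps)
  have denominator: "((\<lambda>t. exp (\<beta> * (x + t)) + m * K) has_real_derivative E * \<beta>) (at 0)"
    by (auto intro!: derivative_eq_intros simp: E_def)
  \<comment> \<open>the weight E/D of the moving point plus a covariance term of the sign of \<open>\<beta> (x - y)\<close>\<close>
  define g' where "g' = E / D + \<beta> * (x - y) * E * m * K / D\<^sup>2"
  have "(E * \<beta> * x + E) * D - (E * x + m * K * y) * (E * \<beta>) = E * D + \<beta> * (x - y) * E * m * K"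
    by (simp add: D_def algebra_simps)
  then have "g' = ((E * \<beta> * x + E) * D - (E * x + m * K * y) * (E * \<beta>)) / (D * D)"
    using D by (simp add: g'_def field_simps power2_eq_square)
  then have "((\<lambda>t. (exp (\<beta> * (x + t)) * (x + t) + m * K * y) / (exp (\<beta> * (x + t)) + m * K))
        has_real_derivative g') (at 0)"
    using DERIV_divide[OF numerator denominator] D by (simp add: E_def D_def)
  moreover have "1 / (1 + m * exp (\<beta> * (y - x))) = E / D"
    using E by (simp add: E_def K_def D_def exp_diff field_simps)
  moreover have "0 \<le> \<beta> * (x - y) * E * m * K / D\<^sup>2"
    using sign E K m by simp
  ultimately show ?thesis unfolding g'_def K_def by auto
qed

lemma has_real_derivative_inner_along_line:
  assumes "(f has_derivative D) (at x)"
  shows "((\<lambda>t. f (x + t *\<^sub>R h) \<bullet> w) has_real_derivative (D h \<bullet> w)) (at 0)"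
proof -
  have "((\<lambda>t. x + t *\<^sub>R h) has_derivative (\<lambda>t. t *\<^sub>R h)) (at 0)"
    by (auto intro!: derivative_eq_intros)
  from diff_chain_at[OF this] assms
  have "((\<lambda>t. f (x + t *\<^sub>R h)) has_derivative (\<lambda>t. D (t *\<^sub>R h))) (at 0)"
    by (simp add: o_def)
  then have "((\<lambda>t. f (x + t *\<^sub>R h) \<bullet> w) has_derivative (\<lambda>t. t * (D h \<bullet> w))) (at 0)"
    using has_derivative_bounded_linear[OF assms]
    by (auto intro!: derivative_eq_intros simp: linear_scale bounded_linear.linear)
  then show ?thesis
    unfolding has_field_derivative_def by (rule has_derivative_eq_rhs) (simp add: fun_eq_iff)
qed

lemma inner_le_onorm_mult_norm:
  assumes "bounded_linear D"
  shows "D h \<bullet> w \<le> onorm D * norm h * norm w"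
proof -
  have "D h \<bullet> w \<le> norm (D h) * norm w"
    by (rule norm_cauchy_schwarz)
  also have "\<dots> \<le> onorm D * norm h * norm w"
    by (rule mult_right_mono[OF onorm[OF assms]]) simp
  finally show ?thesis .
qed

lemma inner_derivative_self_attention_collinear_ge:
  fixes A :: "real^'d^'d" and u :: "real^'d::finite" and j :: "'n::finite"
  assumes n2: "CARD('n) \<ge> 2" and eig: "A *v u = \<gamma> *\<^sub>R u" and unit: "norm u = 1"
    and sign: "\<gamma> * b * (a - b) \<ge> 0"
  defines "X \<equiv> (\<chi> k. if k = j then a *\<^sub>R u else b *\<^sub>R u) :: real^'d^'n"
    and "h \<equiv> (\<chi> k. if k = j then u else 0) :: real^'d^'n"
    and "w \<equiv> (\<chi> k. if k = j then 0 else u) :: real^'d^'n"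
  shows "(real CARD('n) - 1) / (1 + (real CARD('n) - 1) * exp (\<gamma> * R\<^sup>2 * b * (b - a)))
       \<le> frechet_derivative (self_attention A (mat 1)) (at (R *\<^sub>R X)) h \<bullet> w"
proof -
  define m where "m = real CARD('n) - 1"
  define D where "D = frechet_derivative (self_attention A (mat 1)) (at (R *\<^sub>R X))"
  have m: "m \<ge> 1"
    using n2 by (simp add: m_def)
  have D: "(self_attention A (mat 1) has_derivative D) (at (R *\<^sub>R X))"
    unfolding D_def using differentiable_self_attention frechet_derivative_works by blast
  have "R *\<^sub>R X + t *\<^sub>R h = (\<chi> k. (if k = j then R * a + t else R * b) *\<^sub>R u)" for t
    by (simp add: X_def h_def vec_eq_iff algebra_simps)
  then have line: "self_attention A (mat 1) (R *\<^sub>R X + t *\<^sub>R h) \<bullet> w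
      = m * ((exp (\<gamma> * (R * b) * (R * a + t)) * (R * a + t) + m * exp (\<gamma> * (R * b) * (R * b)) * (R * b))
             / (exp (\<gamma> * (R * b) * (R * a + t)) + m * exp (\<gamma> * (R * b) * (R * b))))" for t
    unfolding w_def m_def by (simp add: self_attention_collinear_inner[OF unit eig])
  have "\<gamma> * (R * b) * (R * a - R * b) \<ge> 0"
    using sign mult_nonneg_nonneg[OF sign zero_le_power2[of R]]
    by (simp add: power2_eq_square algebra_simps)
  then obtain g' where g': "1 / (1 + m * exp (\<gamma> * (R * b) * (R * b - R * a))) \<le> g'"
    and "((\<lambda>t. (exp (\<gamma> * (R * b) * (R * a + t)) * (R * a + t) + m * exp (\<gamma> * (R * b) * (R * b)) * (R * b))
              / (exp (\<gamma> * (R * b) * (R * a + t)) + m * exp (\<gamma> * (R * b) * (R * b))))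
           has_real_derivative g') (at 0)"
    using softmax_mean_has_derivative_ge[of m "\<gamma> * (R * b)" "R * a" "R * b"] m by auto
  from DERIV_cmult[OF this(2), of m]
  have "((\<lambda>t. self_attention A (mat 1) (R *\<^sub>R X + t *\<^sub>R h) \<bullet> w) has_real_derivative m * g') (at 0)"
    by (simp only: line)
  then have "D h \<bullet> w = m * g'"
    using DERIV_unique has_real_derivative_inner_along_line[OF D] by blast
  moreover have "\<gamma> * (R * b) * (R * b - R * a) = \<gamma> * R\<^sup>2 * b * (b - a)"
    by (simp add: power2_eq_square algebra_simps)
  then have "m / (1 + m * exp (\<gamma> * R\<^sup>2 * b * (b - a))) \<le> m * g'"
    using mult_left_mono[OF g', of m] m by (simp only:) simp
  ultimately show ?thesis
    unfolding m_def D_def by simp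
qed

lemma onorm_derivative_self_attention_collinear_ge:
  fixes A :: "real^'d^'d" and u :: "real^'d::finite" and j :: "'n::finite"
  assumes n2: "CARD('n) \<ge> 2" and eig: "A *v u = \<gamma> *\<^sub>R u" and unit: "norm u = 1"
    and sign: "\<gamma> * b * (a - b) \<ge> 0"
  defines "X \<equiv> (\<chi> k. if k = j then a *\<^sub>R u else b *\<^sub>R u) :: real^'d^'n"
  shows "sqrt (real CARD('n) - 1) / (1 + (real CARD('n) - 1) * exp (\<gamma> * R\<^sup>2 * b * (b - a)))
       \<le> onorm (frechet_derivative (self_attention A (mat 1)) (at (R *\<^sub>R X)))"
proof -
  define m where "m = real CARD('n) - 1"
  define e where "e = exp (\<gamma> * R\<^sup>2 * b * (b - a))"
  define D where "D = frechet_derivative (self_attention A (mat 1)) (at (R *\<^sub>R X))"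
  define h where "h = ((\<chi> k. if k = j then u else 0) :: real^'d^'n)"
  define w where "w = ((\<chi> k. if k = j then 0 else u) :: real^'d^'n)"
  have m: "m \<ge> 1"
    using n2 by (simp add: m_def)
  have "bounded_linear D"
    unfolding D_def using differentiable_self_attention frechet_derivative_works
    by (blast intro: has_derivative_bounded_linear)
  moreover have "norm h = 1" and "norm w = sqrt m"
    using unit by (simp_all add: h_def w_def norm_vec_if_eq m_def)
  ultimately have "m / (1 + m * e) \<le> onorm D * sqrt m"
    using inner_derivative_self_attention_collinear_ge[OF n2 eig unit sign, where j = j and R = R]
      inner_le_onorm_mult_norm[of D h w]
    unfolding m_def e_def D_def h_def w_def X_def by simp
  moreover have "sqrt m * sqrt m = m"
    using m by simp
  ultimately have "sqrt m * (sqrt m / (1 + m * e)) \<le> sqrt m * onorm D"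
    by (metis times_divide_eq_right mult.commute)
  then have "sqrt m / (1 + m * e) \<le> onorm D"
    by (rule mult_left_le_imp_le) (use m in simp)
  then show ?thesis
    unfolding m_def e_def D_def .
qed

theorem mainTheorem3:
  fixes A :: "real^'d^'d" and u :: "real^'d::finite" and \<gamma> :: real and i0 :: "'n::finite"
  assumes n2: "CARD('n) \<ge> 2"
    and eig: "A *v u = \<gamma> *\<^sub>R u"
    and unit: "norm u = 1"
  shows
    "(\<gamma> \<ge> 0 \<longrightarrow>
      (\<forall>R>0. let X = (\<chi> i. if i = i0 then u else (1/2) *\<^sub>R u) :: real^'d^'n;
                  f = self_attention A (mat 1)
              in f differentiable (at (R *\<^sub>R X)) \<and>
                 onorm (frechet_derivative f (at (R *\<^sub>R X))) \<ge>
                   sqrt (real CARD('n) - 1) /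
                     (1 + (real CARD('n) - 1) * exp (- (R\<^sup>2 * \<gamma> / 4)))))
   \<and>
    (\<gamma> < 0 \<longrightarrow>
      (\<forall>R>0. let X = (\<chi> i. if i = i0 then u else - u) :: real^'d^'n;
                  f = self_attention A (mat 1)
              in f differentiable (at (R *\<^sub>R X)) \<and>
                 onorm (frechet_derivative f (at (R *\<^sub>R X))) \<ge>
                   sqrt (real CARD('n) - 1) /
                     (1 + (real CARD('n) - 1) * exp (- (2 * R\<^sup>2 * \<bar>\<gamma>\<bar>)))))"
  apply (intro conjI impI allI; unfold Let_def; intro conjI differentiable_self_attention)
  subgoal premises sign for R
  proof -
    have "\<gamma> * R\<^sup>2 * (1/2) * (1/2 - 1) = - (R\<^sup>2 * \<gamma> / 4)"
      by (simp add: field_simps)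
    moreover have "(\<chi> k. if k = i0 then 1 *\<^sub>R u else (1/2) *\<^sub>R u) =
                   ((\<chi> i. if i = i0 then u else (1/2) *\<^sub>R u) :: real^'d^'n)"
      by (simp add: vec_eq_iff)
    ultimately show ?thesis
      using onorm_derivative_self_attention_collinear_ge[OF n2 eig unit, where a = 1 and b = "1/2" and j = i0 and R = R] sign
      by (simp add: mult_ac)
  qed
  subgoal premises sign for R
  proof -
    have "\<gamma> * R\<^sup>2 * (-1) * (-1 - 1) = - (2 * R\<^sup>2 * \<bar>\<gamma>\<bar>)"
      using sign by simp
    moreover have "(\<chi> k. if k = i0 then 1 *\<^sub>R u else (-1) *\<^sub>R u) =
                   ((\<chi> i. if i = i0 then u else - u) :: real^'d^'n)"
      by (simp add: vec_eq_iff)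
    ultimately show ?thesis
      using onorm_derivative_self_attention_collinear_ge[OF n2 eig unit, where a = 1 and b = "-1" and j = i0 and R = R] sign
      by (simp add: mult_ac)
  qed
  done

end
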